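(* Let $n\ge 2$ and let $\mathbf b_1,\mathbf b_2\in\mathbb R^n_+$ be linearly independent nonnegative vectors with $\operatorname{supp}\mathbf b_1\supseteq\operatorname{supp}\mathbf b_2$. Then the matrix $A=\mathbf b_1\mathbf b_1^T+\mathbf b_2\mathbf b_2^T$ has infinitely many minimal CP factorizations.
   Context: For $\mathbf x\in\mathbb R^n$, $\operatorname{supp}\mathbf x=\{i : x_i\neq 0\}$. A symmetric $n\times n$ matrix $A$ is completely positive if $A=BB^T$ for some entrywise nonnegative $n\times k$ matrix $B$; such an equality is a CP factorization of $A$. Only CP factorizations in which the columns of $B$ are pairwise linearly independent are considered, and two CP factorizations $A=BB^T=CC^T$ are considered equal if $C=BP$ for a permutation matrix $P$. The cp-rank of $A$ is the minimal number of columns of such a nonnegative $B$; a CP factorization with that many columns is called minimal. *)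

theory Defs
  imports "HOL-Analysis.Analysis" "HOL-Library.Multiset"
begin

text \<open>A real n x k matrix B is represented by the list of its k columns
  (vectors in real^'n).  Its Gram matrix B B^T is the sum of the outer
  products of its columns.\<close>

definition outer :: "real^'n \<Rightarrow> real^'n^'n" where
  "outer b = (\<chi> i j. b $ i * b $ j)"

definition BBt :: "(real^'n) list \<Rightarrow> real^'n^'n" where
  "BBt Bs = sum_list (map outer Bs)"

definition nonneg_cols :: "(real^'n) list \<Rightarrow> bool" where
  "nonneg_cols Bs \<longleftrightarrow> (\<forall>b\<in>set Bs. \<forall>i. 0 \<le> b $ i)"

definition pairwise_lin_indep :: "(real^'n) list \<Rightarrow> bool" where
  "pairwise_lin_indep Bs \<longleftrightarrow>
     (\<forall>i j. i < length Bs \<and> j < length Bs \<and> i \<noteq> j \<longrightarrow>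
        Bs ! i \<noteq> Bs ! j \<and> independent {Bs ! i, Bs ! j})"

definition cp_factorization :: "real^'n^'n \<Rightarrow> (real^'n) list \<Rightarrow> bool" where
  "cp_factorization A Bs \<longleftrightarrow> nonneg_cols Bs \<and> pairwise_lin_indep Bs \<and> A = BBt Bs"

definition cp_rank :: "real^'n^'n \<Rightarrow> nat" where
  "cp_rank A = (LEAST k. \<exists>Bs. length Bs = k \<and> nonneg_cols Bs \<and> A = BBt Bs)"

definition minimal_cp_factorization :: "real^'n^'n \<Rightarrow> (real^'n) list \<Rightarrow> bool" where
  "minimal_cp_factorization A Bs \<longleftrightarrow> cp_factorization A Bs \<and> length Bs = cp_rank A"

text \<open>Factorizations are identified up to column permutation (C = B P),
  i.e. up to equality of the multisets of columns.\<close>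
definition minimal_cp_factorizations :: "real^'n^'n \<Rightarrow> (real^'n) multiset set" where
  "minimal_cp_factorizations A = mset ` {Bs. minimal_cp_factorization A Bs}"

end

theory Submission
  imports Defs
begin

text \<open>Rotating the factor [b1, b2] by an orthogonal 2 x 2 matrix does not change the Gram
  matrix. Since supp b2 \<subseteq> supp b1, we have b2 \<le> K b1 entrywise for some K, so for all
  sufficiently small rotation angles the rotated columns stay nonnegative, and distinct angles
  give distinct factorizations. As A has rank two, its cp-rank is two, so all of these
  factorizations are minimal.\<close>

lemma independent_pair_iff:
  fixes a b :: "'a::real_vector"
  shows "a \<noteq> b \<and> independent {a, b} \<longleftrightarrow> (\<forall>x y. x *\<^sub>R a + y *\<^sub>R b = 0 \<longrightarrow> x = 0 \<and> y = 0)"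
proof
  assume ab: "a \<noteq> b \<and> independent {a, b}"
  show "\<forall>x y. x *\<^sub>R a + y *\<^sub>R b = 0 \<longrightarrow> x = 0 \<and> y = 0"
  proof (intro allI impI)
    fix x y :: real assume xy: "x *\<^sub>R a + y *\<^sub>R b = 0"
    have a: "a \<notin> span {b}" and b: "b \<noteq> 0"
      using ab by (auto simp: independent_insert)
    have "x = 0"
    proof (rule ccontr)
      assume "x \<noteq> 0"
      have "x *\<^sub>R a = (- y) *\<^sub>R b"
        using xy by (simp add: add_eq_0_iff2)
      then have "a = (- y / x) *\<^sub>R b"
        using \<open>x \<noteq> 0\<close> by (metis divide_inverse_commute scaleR_scaleR scaleR_one left_inverse)
      moreover have "(- y / x) *\<^sub>R b \<in> span {b}"
        by (intro span_scale span_base) simp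
      ultimately show False using a by simp
    qed
    with xy b show "x = 0 \<and> y = 0" by simp
  qed
next
  assume H: "\<forall>x y. x *\<^sub>R a + y *\<^sub>R b = 0 \<longrightarrow> x = 0 \<and> y = 0"
  have "a \<notin> span {b}"
  proof
    assume "a \<in> span {b}"
    then obtain k where "a = k *\<^sub>R b" by (auto simp: span_singleton)
    then show False using H[rule_format, of 1 "- k"] by simp
  qed
  moreover have "b \<noteq> 0" using H[rule_format, of 0 1] by auto
  ultimately show "a \<noteq> b \<and> independent {a, b}"
    by (auto simp: independent_insert span_base)
qed

lemma independent_pair_coeffs_zero:
  fixes a b :: "'a::real_vector"
  assumes "a \<noteq> b" "independent {a, b}" "x *\<^sub>R a + y *\<^sub>R b = 0"
  shows "x = 0 \<and> y = 0"
  using assms independent_pair_iff by blast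

lemma independent_pair_coeffs_eq:
  fixes a b :: "'a::real_vector"
  assumes "a \<noteq> b" "independent {a, b}" "x *\<^sub>R a + y *\<^sub>R b = x' *\<^sub>R a + y' *\<^sub>R b"
  shows "x = x' \<and> y = y'"
proof -
  have "(x - x') *\<^sub>R a + (y - y') *\<^sub>R b = 0"
    using assms(3) by (simp add: algebra_simps)
  then show ?thesis using independent_pair_coeffs_zero[OF assms(1,2)] by fastforce
qed

lemma pairwise_lin_indep_pair_iff:
  "pairwise_lin_indep [a, b] \<longleftrightarrow> a \<noteq> b \<and> independent {a, b}"
proof
  assume "pairwise_lin_indep [a, b]"
  then show "a \<noteq> b \<and> independent {a, b}"
    unfolding pairwise_lin_indep_def by (erule_tac allE[of _ 0], erule_tac allE[of _ 1]) simp
qed (auto simp: pairwise_lin_indep_def less_Suc_eq insert_commute)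

lemma mset_pair_eq_iff:
  "mset [a, b] = mset [c, d] \<longleftrightarrow> a = c \<and> b = d \<or> a = d \<and> b = c"
  by (auto simp: add_eq_conv_ex)

text \<open>The 2 x 2 principal minors of outer a + outer b are the squared 2 x 2 minors
  of [a, b], whereas those of outer c vanish.\<close>
lemma outer_add_outer_neq_outer:
  fixes a b c :: "real^'n"
  assumes "a \<noteq> b" "independent {a, b}"
  shows "outer a + outer b \<noteq> outer c"
proof
  assume eq: "outer a + outer b = outer c"
  have minor: "a$i * b$j = a$j * b$i" for i j
  proof -
    have "(outer a + outer b)$i$i * (outer a + outer b)$j$j - ((outer a + outer b)$i$j)^2
          = (a$i * b$j - a$j * b$i)^2"
      by (simp add: outer_def power2_eq_square algebra_simps)
    moreover have "(outer c)$i$i * (outer c)$j$j - ((outer c)$i$j)^2 = 0"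
      by (simp add: outer_def power2_eq_square)
    ultimately show ?thesis using eq by simp
  qed
  have "a \<noteq> 0" using assms(2) dependent_zero by blast
  then obtain i where i: "a$i \<noteq> 0" by (auto simp: vec_eq_iff)
  have "(b$i) *\<^sub>R a + (- a$i) *\<^sub>R b = 0"
    using minor by (auto simp: vec_eq_iff algebra_simps)
  then have "- a$i = 0" by (rule independent_pair_coeffs_zero[OF assms, THEN conjunct2])
  with i show False by simp
qed

lemma cp_rank_outer_add_outer:
  fixes a b :: "real^'n"
  assumes "\<forall>i. 0 \<le> a $ i" "\<forall>i. 0 \<le> b $ i" "a \<noteq> b" "independent {a, b}"
  shows "cp_rank (outer a + outer b) = 2"
  unfolding cp_rank_def
proof (rule Least_equality)
  show "\<exists>Bs. length Bs = 2 \<and> nonneg_cols Bs \<and> outer a + outer b = BBt Bs"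
    using assms by (intro exI[of _ "[a, b]"]) (auto simp: nonneg_cols_def BBt_def)
next
  fix k assume "\<exists>Bs. length Bs = k \<and> nonneg_cols Bs \<and> outer a + outer b = BBt Bs"
  then obtain Bs where Bs: "length Bs = k" "outer a + outer b = BBt Bs" by blast
  show "2 \<le> k"
  proof (rule ccontr)
    assume "\<not> 2 \<le> k"
    then consider "Bs = []" | c where "Bs = [c]"
      using Bs(1) by (metis length_0_conv length_Suc_conv less_2_cases not_le)
    then obtain c where "BBt Bs = outer c"
    proof cases
      case 1
      then have "BBt Bs = outer 0" by (simp add: BBt_def outer_def vec_eq_iff)
      then show ?thesis using that by blast
    qed (auto simp: BBt_def intro: that)
    then show False using outer_add_outer_neq_outer[OF assms(3,4)] Bs(2) by metis
  qed
qed

text \<open>The factor [a, b] multiplied on the right by the rotation matrix [[c, s], [-s, c]].\<close>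
definition rotate_cols :: "real \<Rightarrow> real \<Rightarrow> real^'n \<Rightarrow> real^'n \<Rightarrow> (real^'n) list" where
  "rotate_cols c s a b = [c *\<^sub>R a - s *\<^sub>R b, s *\<^sub>R a + c *\<^sub>R b]"

lemma BBt_rotate_cols:
  assumes "c\<^sup>2 + s\<^sup>2 = 1"
  shows "BBt (rotate_cols c s a b) = outer a + outer b"
proof -
  have "(c * a$i - s * b$i) * (c * a$j - s * b$j) + (s * a$i + c * b$i) * (s * a$j + c * b$j)
        = (c\<^sup>2 + s\<^sup>2) * (a$i * a$j + b$i * b$j)" for i j
    by (simp add: power2_eq_square algebra_simps)
  then show ?thesis
    using assms by (simp add: rotate_cols_def BBt_def outer_def vec_eq_iff)
qed

lemma pairwise_lin_indep_rotate_cols: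
  assumes "c\<^sup>2 + s\<^sup>2 = 1" "a \<noteq> b" "independent {a, b}"
  shows "pairwise_lin_indep (rotate_cols c s a b)"
  unfolding rotate_cols_def pairwise_lin_indep_pair_iff independent_pair_iff
proof (intro allI impI)
  fix x y :: real
  assume "x *\<^sub>R (c *\<^sub>R a - s *\<^sub>R b) + y *\<^sub>R (s *\<^sub>R a + c *\<^sub>R b) = 0"
  then have "(x * c + y * s) *\<^sub>R a + (y * c - x * s) *\<^sub>R b = 0"
    by (simp add: algebra_simps)
  then have e: "x * c + y * s = 0" "y * c - x * s = 0"
    using independent_pair_coeffs_zero[OF assms(2,3)] by blast+
  have "x = x * (c\<^sup>2 + s\<^sup>2)" using assms(1) by simp
  also have "\<dots> = c * (x * c + y * s) - s * (y * c - x * s)"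
    by (simp add: power2_eq_square algebra_simps)
  also have "\<dots> = 0" by (simp add: e)
  finally have "x = 0" .
  have "y = y * (c\<^sup>2 + s\<^sup>2)" using assms(1) by simp
  also have "\<dots> = s * (x * c + y * s) + c * (y * c - x * s)"
    by (simp add: power2_eq_square algebra_simps)
  also have "\<dots> = 0" by (simp add: e)
  finally show "x = 0 \<and> y = 0" using \<open>x = 0\<close> by simp
qed

lemma nonneg_cols_rotate_cols:
  assumes "\<forall>i. 0 \<le> a $ i" "\<forall>i. 0 \<le> b $ i" "\<forall>i. b $ i \<le> K * a $ i"
    and "0 \<le> s" "0 \<le> c" "s * K \<le> c"
  shows "nonneg_cols (rotate_cols c s a b)"
proof -
  have "s * b $ i \<le> c * a $ i" for i
  proof -
    have "s * b $ i \<le> s * K * a $ i"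
      using assms(3,4) mult_left_mono by (fastforce simp: mult.assoc)
    also have "\<dots> \<le> c * a $ i"
      using assms(1,6) mult_right_mono by blast
    finally show ?thesis .
  qed
  then show ?thesis
    using assms(1,2,4,5) by (simp add: nonneg_cols_def rotate_cols_def)
qed

lemma support_subset_imp_dominated:
  fixes a b :: "real^'n"
  assumes "\<forall>i. 0 \<le> a $ i" "\<forall>i. 0 \<le> b $ i" "{i. b $ i \<noteq> 0} \<subseteq> {i. a $ i \<noteq> 0}"
  obtains K where "0 \<le> K" "\<forall>i. b $ i \<le> K * a $ i"
proof
  define K where "K = (\<Sum>i\<in>UNIV. b $ i / a $ i)"
  show "0 \<le> K" unfolding K_def using assms(1,2) by (simp add: sum_nonneg)
  show "\<forall>i. b $ i \<le> K * a $ i"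
  proof
    fix i
    show "b $ i \<le> K * a $ i"
    proof (cases "a $ i = 0")
      case True
      then have "b $ i = 0" using assms(3) by blast
      with True show ?thesis by simp
    next
      case False
      then have "0 < a $ i" using assms(1) by (simp add: order_less_le)
      moreover have "b $ i / a $ i \<le> K" unfolding K_def
        using assms(1,2) by (intro member_le_sum) auto
      ultimately show ?thesis by (simp add: divide_le_eq)
    qed
  qed
qed

lemma rotate_cols_in_minimal_cp_factorizations:
  assumes "\<forall>i. 0 \<le> a $ i" "\<forall>i. 0 \<le> b $ i" "a \<noteq> b" "independent {a, b}"
    and "\<forall>i. b $ i \<le> K * a $ i"
    and "c\<^sup>2 + s\<^sup>2 = 1" "0 \<le> s" "0 \<le> c" "s * K \<le> c"
  shows "mset (rotate_cols c s a b) \<in> minimal_cp_factorizations (outer a + outer b)"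
proof -
  have "minimal_cp_factorization (outer a + outer b) (rotate_cols c s a b)"
    unfolding minimal_cp_factorization_def cp_factorization_def
    using nonneg_cols_rotate_cols[OF assms(1,2,5,7-9)]
      pairwise_lin_indep_rotate_cols[OF assms(6,3,4)] BBt_rotate_cols[OF assms(6), of a b] cp_rank_outer_add_outer[OF assms(1-4)]
    by (simp add: rotate_cols_def)
  then show ?thesis unfolding minimal_cp_factorizations_def by blast
qed

lemma mset_rotate_cols_eq_imp_eq:
  assumes "a \<noteq> b" "independent {a, b}" "0 \<le> s" "0 < c'"
    and "mset (rotate_cols c s a b) = mset (rotate_cols c' s' a b)"
  shows "s = s'"
proof -
  have "c *\<^sub>R a - s *\<^sub>R b = c' *\<^sub>R a - s' *\<^sub>R b \<or> c *\<^sub>R a - s *\<^sub>R b = s' *\<^sub>R a + c' *\<^sub>R b"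
    using assms(5) unfolding rotate_cols_def mset_pair_eq_iff by blast
  then show ?thesis
  proof
    assume "c *\<^sub>R a - s *\<^sub>R b = c' *\<^sub>R a - s' *\<^sub>R b"
    then have "c *\<^sub>R a + (- s) *\<^sub>R b = c' *\<^sub>R a + (- s') *\<^sub>R b" by simp
    then have "- s = - s'" using independent_pair_coeffs_eq[OF assms(1,2)] by blast
    then show "s = s'" by simp
  next
    assume "c *\<^sub>R a - s *\<^sub>R b = s' *\<^sub>R a + c' *\<^sub>R b"
    then have "c *\<^sub>R a + (- s) *\<^sub>R b = s' *\<^sub>R a + c' *\<^sub>R b" by simp
    then have "- s = c'" using independent_pair_coeffs_eq[OF assms(1,2)] by blast
    with assms(3,4) show "s = s'" by simp
  qed
qed

text \<open>For small s the cosine sqrt (1 - s^2) exceeds 1 - s, which dominates s K.\<close>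
lemma small_sine_bounds:
  fixes K s :: real
  assumes "0 \<le> K" "0 \<le> s" "s * (K + 1) < 1"
  shows "0 < sqrt (1 - s\<^sup>2)" "s * K \<le> sqrt (1 - s\<^sup>2)" "(sqrt (1 - s\<^sup>2))\<^sup>2 + s\<^sup>2 = 1"
proof -
  have "s \<le> s * (K + 1)" using assms(1,2) by (simp add: algebra_simps)
  then have "s < 1" using assms(3) by simp
  then have "(1 - s)\<^sup>2 \<le> 1 - s\<^sup>2"
    using assms(2) by (simp add: power2_eq_square algebra_simps mult_right_le_one_le)
  then have "1 - s \<le> sqrt (1 - s\<^sup>2)" using \<open>s < 1\<close> by (simp add: real_le_rsqrt)
  then show "s * K \<le> sqrt (1 - s\<^sup>2)" using assms(3) by (simp add: algebra_simps)
  have "s\<^sup>2 < 1" using \<open>s < 1\<close> assms(2) by (simp add: power_less_one_iff abs_square_less_1)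
  then show "0 < sqrt (1 - s\<^sup>2)" "(sqrt (1 - s\<^sup>2))\<^sup>2 + s\<^sup>2 = 1" by simp_all
qed

theorem mainTheorem1:
  fixes b1 b2 :: "real^'n"
  assumes "CARD('n) \<ge> 2"
    and "\<forall>i. 0 \<le> b1 $ i" and "\<forall>i. 0 \<le> b2 $ i"
    and "b1 \<noteq> b2" and "independent {b1, b2}"
    and "{i. b2 $ i \<noteq> 0} \<subseteq> {i. b1 $ i \<noteq> 0}"
  shows "infinite (minimal_cp_factorizations (outer b1 + outer b2))"
proof -
  obtain K where K: "0 \<le> K" "\<forall>i. b2 $ i \<le> K * b1 $ i"
    using support_subset_imp_dominated assms(2,3,6) by blast
  define S where "S = {0 ..< 1 / (K + 1)}"
  define F where "F s = mset (rotate_cols (sqrt (1 - s\<^sup>2)) s b1 b2)" for s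
  have S: "0 \<le> s" "s * (K + 1) < 1" if "s \<in> S" for s
    using that K(1) by (auto simp: S_def pos_less_divide_eq add_nonneg_pos)
  have "F ` S \<subseteq> minimal_cp_factorizations (outer b1 + outer b2)"
    using rotate_cols_in_minimal_cp_factorizations[OF assms(2-5) K(2)] small_sine_bounds[OF K(1)] S
    by (auto simp: F_def less_imp_le)
  moreover have "inj_on F S"
  proof (rule inj_onI)
    fix s t assume "s \<in> S" "t \<in> S" "F s = F t"
    then show "s = t"
      using mset_rotate_cols_eq_imp_eq[OF assms(4,5)] small_sine_bounds(1)[OF K(1)] S
      unfolding F_def by blast
  qed
  moreover have "infinite S" unfolding S_def using K(1) by (simp add: add_nonneg_pos)
  ultimately show ?thesis using finite_image_iff finite_subset by metis
qed

end
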